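(* Let $k$ be a positive integer and $L\in\mathcal L_k$. Place each vertex of $V$ at the corresponding point of $\mathbb Q\cup\{\infty\}\subset\mathbb R\cup\{\infty\}=\partial_\infty\mathbb H$ of the hyperbolic plane $\mathbb H$ (upper half-plane model), and draw each edge of $\mathcal F_k$ whose two endpoints both lie in $\phi_k^{-1}(L)$ as the hyperbolic geodesic joining its endpoints. Then any two distinct such geodesics are disjoint in $\mathbb H$; that is, this drawing is a planar embedding of the subgraph of $\mathcal F_k$ induced on $\phi_k^{-1}(L)$.
   Context: The vertex set $V$ consists of all reduced fractions $p/q$ with $p,q\in\mathbb Z$, $\gcd(p,q)=1$, together with $1/0$ (identified with $\infty$); here $p/q$ and $(-p)/(-q)$ denote the same vertex. For vertices define $d(p/q,a/b)=|pb-qa|$. The graph $\mathcal F_k$ has vertex set $V$, with an edge between $p/q$ and $a/b$ exactly when $d(p/q,a/b)=k$. An element $(a,b)\in(\mathbb Z/k\mathbb Z)^2$ is admissible if for $\lambda\in\mathbb Z/k\mathbb Z$, $(\lambda a,\lambda b)=0$ implies $\lambda=0$; $\mathcal L_k$ is the set of admissible elements modulo $v\sim\lambda v$ for units $\lambda\in(\mathbb Z/k\mathbb Z)^*$; $\phi_k:V\to\mathcal L_k$ sends $p/q$ to the class of $(p\bmod k,q\bmod k)$. *)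

theory Defs
  imports Complex_Main
begin

text \<open>A vertex p/q is represented by a pair (p,q) of coprime integers;
  (p,q) and (-p,-q) represent the same vertex, and (1,0), (-1,0) represent infinity.
  All notions below are invariant under this sign change.\<close>

definition Vert :: "(int \<times> int) set" where
  "Vert = {(p, q). coprime p q}"

definition dist_F :: "int \<times> int \<Rightarrow> int \<times> int \<Rightarrow> int" where
  "dist_F v w = \<bar>fst v * snd w - snd v * fst w\<bar>"

text \<open>Z/kZ is represented by {0..<k}.\<close>

definition admissible :: "int \<Rightarrow> int \<times> int \<Rightarrow> bool" where
  "admissible k v \<longleftrightarrow> fst v \<in> {0..<k} \<and> snd v \<in> {0..<k} \<and>
     (\<forall>l\<in>{0..<k}. (l * fst v) mod k = 0 \<and> (l * snd v) mod k = 0 \<longrightarrow> l = 0)"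

definition unit_class :: "int \<Rightarrow> int \<times> int \<Rightarrow> (int \<times> int) set" where
  "unit_class k v = {((u * fst v) mod k, (u * snd v) mod k) | u. u \<in> {0..<k} \<and> coprime u k}"

definition Lk :: "int \<Rightarrow> (int \<times> int) set set" where
  "Lk k = unit_class k ` {v. admissible k v}"

definition phi :: "int \<Rightarrow> int \<times> int \<Rightarrow> (int \<times> int) set" where
  "phi k v = unit_class k (fst v mod k, snd v mod k)"

definition geod :: "int \<times> int \<Rightarrow> int \<times> int \<Rightarrow> complex set" where
  "geod v w =
    (if snd v = 0 then {z. Re z = real_of_int (fst w) / real_of_int (snd w) \<and> Im z > 0}
     else if snd w = 0 then {z. Re z = real_of_int (fst v) / real_of_int (snd v) \<and> Im z > 0}
     else (let x = real_of_int (fst v) / real_of_int (snd v);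
               y = real_of_int (fst w) / real_of_int (snd w)
           in {z. Im z > 0 \<and> cmod (z - complex_of_real ((x + y) / 2)) = \<bar>x - y\<bar> / 2}))"

end

theory Submission
  imports Defs
begin

text \<open>Every geodesic joining two vertices at \<open>\<F>\<close>-distance \<open>k\<close> is the upper half of a generalized circle
  \<open>A |z|\<^sup>2 + B Re z + C = 0\<close> with integral coefficients and discriminant \<open>B\<^sup>2 - 4AC = k\<^sup>2\<close>.
  Two such circles that meet in the upper half-plane have inversive product
  \<open>B B' - 2AC' - 2A'C\<close> of absolute value at most \<open>k\<^sup>2\<close>, with equality only if they coincide
  (equality in Cauchy-Schwarz). For the circles through \<open>v, w\<close> and \<open>v', w'\<close> the inversive
  product is \<open>-(\<Delta>(v,v')\<Delta>(w,w') + \<Delta>(v,w')\<Delta>(w,v'))\<close>. If all four endpoints have the same image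
  under \<open>\<phi>\<^sub>k\<close>, all cross determinants \<open>\<Delta>\<close> are divisible by \<open>k\<close>; by the Pluecker relation the
  two products of the quotients differ by \<open>\<plusminus>1\<close>, so their sum is odd, hence nonzero, and the
  inversive product has absolute value at least \<open>k\<^sup>2\<close>.\<close>

definition det2 :: "int \<times> int \<Rightarrow> int \<times> int \<Rightarrow> int" where
  "det2 v w = fst v * snd w - snd v * fst w"

lemma dist_F_eq_abs_det2: "dist_F v w = \<bar>det2 v w\<bar>"
  unfolding dist_F_def det2_def by simp

lemma det2_pluecker: "det2 v w * det2 v' w' = det2 v v' * det2 w w' - det2 v w' * det2 w v'"
  unfolding det2_def by (simp add: algebra_simps)

lemma mod_pair_in_phi:
  assumes "k > 0"
  shows "(fst v mod k, snd v mod k) \<in> phi k v"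
proof -
  have "1 mod k = (if k = 1 then 0 else 1)"
    using assms by auto
  then have "1 mod k \<in> {0..<k}" "coprime (1 mod k) k"
    using assms by auto
  then show ?thesis
    unfolding phi_def unit_class_def by (auto intro!: exI[of _ "1 mod k"] simp: mod_mult_left_eq)
qed

lemma phi_eq_imp_dvd_det2:
  assumes "k > 0" "phi k v = phi k w"
  shows "k dvd det2 v w"
proof -
  have "(fst w mod k, snd w mod k) \<in> phi k v"
    using mod_pair_in_phi[OF assms(1)] assms(2) by simp
  then obtain u where "fst w mod k = (u * (fst v mod k)) mod k" "snd w mod k = (u * (snd v mod k)) mod k"
    unfolding phi_def unit_class_def by auto
  then have a: "fst w mod k = (u * fst v) mod k" and b: "snd w mod k = (u * snd v) mod k"
    by (simp_all add: mod_mult_right_eq)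
  have "det2 v w mod k = (fst v * (u * snd v) - snd v * (u * fst v)) mod k"
    unfolding det2_def by (metis a b mod_diff_cong mod_mult_right_eq)
  also have "\<dots> = 0" by (simp add: algebra_simps)
  finally show ?thesis by (simp add: mod_eq_0_iff_dvd)
qed

lemma det2_cross_sum_lower_bound:
  fixes k :: int
  assumes "k > 0" "\<bar>det2 v w\<bar> = k" "\<bar>det2 v' w'\<bar> = k"
    and "k dvd det2 v v'" "k dvd det2 w w'" "k dvd det2 v w'" "k dvd det2 w v'"
  shows "k\<^sup>2 \<le> \<bar>det2 v v' * det2 w w' + det2 v w' * det2 w v'\<bar>"
proof -
  obtain a1 a2 a3 a4 where
    a: "det2 v v' = k * a1" "det2 w w' = k * a2" "det2 v w' = k * a3" "det2 w v' = k * a4"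
    using assms(4-7) by (metis dvdE)
  have "det2 v w * det2 v' w' = k\<^sup>2 * (a1 * a2 - a3 * a4)"
    unfolding det2_pluecker a by (simp add: power2_eq_square algebra_simps)
  then have "k\<^sup>2 * \<bar>a1 * a2 - a3 * a4\<bar> = \<bar>det2 v w * det2 v' w'\<bar>"
    by (simp add: abs_mult)
  also have "\<dots> = k\<^sup>2 * 1"
    using assms(2,3) by (simp add: abs_mult power2_eq_square)
  finally have "\<bar>a1 * a2 - a3 * a4\<bar> = 1"
    using assms(1) by simp
  then have "odd (a1 * a2 + a3 * a4)"
    by (metis odd_one even_abs_add_iff even_add even_diff mult_2 add_diff_cancel_left')
  then have "1 \<le> \<bar>a1 * a2 + a3 * a4\<bar>"
    by (cases "a1 * a2 + a3 * a4 = 0") auto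
  then have "k\<^sup>2 * 1 \<le> k\<^sup>2 * \<bar>a1 * a2 + a3 * a4\<bar>"
    by (intro mult_left_mono) auto
  moreover have "det2 v v' * det2 w w' + det2 v w' * det2 w v' = k\<^sup>2 * (a1 * a2 + a3 * a4)"
    unfolding a by (simp add: power2_eq_square algebra_simps)
  ultimately show ?thesis
    by (simp add: abs_mult)
qed

text \<open>The geodesic from \<open>p/q\<close> to \<open>r/s\<close> lies on the generalized circle
  \<open>(q x - p)(s x - r) + q s y\<^sup>2 = 0\<close>.\<close>

definition circ_A :: "int \<times> int \<Rightarrow> int \<times> int \<Rightarrow> int" where
  "circ_A v w = snd v * snd w"

definition circ_B :: "int \<times> int \<Rightarrow> int \<times> int \<Rightarrow> int" where
  "circ_B v w = - (fst v * snd w + snd v * fst w)"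

definition circ_C :: "int \<times> int \<Rightarrow> int \<times> int \<Rightarrow> int" where
  "circ_C v w = fst v * fst w"

lemma circ_discriminant:
  "(of_int (circ_B v w))\<^sup>2 - 4 * of_int (circ_A v w) * of_int (circ_C v w)
     = (of_int (det2 v w) :: 'a :: comm_ring_1)\<^sup>2"
  unfolding circ_A_def circ_B_def circ_C_def det2_def by (simp add: algebra_simps power2_eq_square)

lemma circ_inversive_product:
  "of_int (circ_B v w) * of_int (circ_B v' w') - 2 * of_int (circ_A v w) * of_int (circ_C v' w')
       - 2 * of_int (circ_A v' w') * of_int (circ_C v w)
     = - (of_int (det2 v v' * det2 w w' + det2 v w' * det2 w v') :: 'a :: comm_ring_1)"
  unfolding circ_A_def circ_B_def circ_C_def det2_def by (simp add: algebra_simps)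

lemma mem_geod_iff_circ:
  assumes "det2 v w \<noteq> 0"
  shows "z \<in> geod v w \<longleftrightarrow> Im z > 0 \<and>
    of_int (circ_A v w) * ((Re z)\<^sup>2 + (Im z)\<^sup>2) + of_int (circ_B v w) * Re z + of_int (circ_C v w) = 0"
proof -
  obtain p q r s where v: "v = (p, q)" and w: "w = (r, s)" by force
  have d: "p * s - q * r \<noteq> 0" using assms v w by (simp add: det2_def)
  consider "q = 0" | "q \<noteq> 0" "s = 0" | "q \<noteq> 0" "s \<noteq> 0" by blast
  then show ?thesis
  proof cases
    case 1
    then have "s \<noteq> 0" "p \<noteq> 0" using d by auto
    with 1 show ?thesis unfolding geod_def circ_A_def circ_B_def circ_C_def v w
      by (auto simp: field_simps)
  next
    case 2
    then have "r \<noteq> 0" using d by auto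
    with 2 show ?thesis unfolding geod_def circ_A_def circ_B_def circ_C_def v w
      by (auto simp: field_simps)
  next
    case 3
    define x where "x = real_of_int p / of_int q"
    define y where "y = real_of_int r / of_int s"
    have "cmod (z - complex_of_real ((x + y) / 2)) = \<bar>x - y\<bar> / 2 \<longleftrightarrow>
          (cmod (z - complex_of_real ((x + y) / 2)))\<^sup>2 = (\<bar>x - y\<bar> / 2)\<^sup>2"
      by (simp add: power2_eq_iff_nonneg)
    also have "\<dots> \<longleftrightarrow> (Re z - (x + y) / 2)\<^sup>2 + (Im z)\<^sup>2 = (x - y)\<^sup>2 / 4"
      by (simp add: cmod_power2 power_divide)
    also have "\<dots> \<longleftrightarrow> (Re z)\<^sup>2 + (Im z)\<^sup>2 - (x + y) * Re z + x * y = 0"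
      by (simp add: power2_eq_square field_simps) (intro iffI; linarith)
    also have "\<dots> \<longleftrightarrow> of_int (q * s) * ((Re z)\<^sup>2 + (Im z)\<^sup>2 - (x + y) * Re z + x * y) = 0"
      using 3 by simp
    also have "of_int (q * s) * ((Re z)\<^sup>2 + (Im z)\<^sup>2 - (x + y) * Re z + x * y)
        = of_int (circ_A v w) * ((Re z)\<^sup>2 + (Im z)\<^sup>2) + of_int (circ_B v w) * Re z + of_int (circ_C v w)"
      unfolding circ_A_def circ_B_def circ_C_def v w x_def y_def using 3
      by (simp add: field_simps)
    finally show ?thesis
      using 3 unfolding geod_def v w x_def y_def Let_def by auto
  qed
qed

text \<open>At a common point \<open>(x, y)\<close> the discriminant of each circle is \<open>u\<^sup>2 + t\<^sup>2\<close> with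
  \<open>(u, t) = (B + 2Ax, 2Ay)\<close>, and the inversive product is \<open>u\<^sub>1 u\<^sub>2 + t\<^sub>1 t\<^sub>2\<close>. By Lagrange's
  identity the hypothesis forces \<open>(u\<^sub>1, t\<^sub>1)\<close> and \<open>(u\<^sub>2, t\<^sub>2)\<close> to be parallel, and \<open>y > 0\<close>
  turns this into \<open>A\<^sub>2 B\<^sub>1 = A\<^sub>1 B\<^sub>2\<close>.\<close>

lemma circles_proportional_if_common_upper_point:
  fixes A1 B1 C1 A2 B2 C2 x y :: real
  assumes "y > 0"
    and e1: "A1 * (x\<^sup>2 + y\<^sup>2) + B1 * x + C1 = 0"
    and e2: "A2 * (x\<^sup>2 + y\<^sup>2) + B2 * x + C2 = 0"
    and K1: "B1\<^sup>2 - 4 * A1 * C1 > 0" and K2: "B2\<^sup>2 - 4 * A2 * C2 > 0"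
    and P: "(B1\<^sup>2 - 4 * A1 * C1) * (B2\<^sup>2 - 4 * A2 * C2) \<le> (B1 * B2 - 2 * A1 * C2 - 2 * A2 * C1)\<^sup>2"
  shows "\<exists>c. c \<noteq> 0 \<and> A2 = c * A1 \<and> B2 = c * B1 \<and> C2 = c * C1"
proof -
  define u1 where "u1 = B1 + 2 * A1 * x"
  define u2 where "u2 = B2 + 2 * A2 * x"
  define t1 where "t1 = 2 * A1 * y"
  define t2 where "t2 = 2 * A2 * y"
  have c1: "C1 = - A1 * (x\<^sup>2 + y\<^sup>2) - B1 * x" using e1 by linarith
  have c2: "C2 = - A2 * (x\<^sup>2 + y\<^sup>2) - B2 * x" using e2 by linarith
  have "(B1\<^sup>2 - 4 * A1 * C1) * (B2\<^sup>2 - 4 * A2 * C2) - (B1 * B2 - 2 * A1 * C2 - 2 * A2 * C1)\<^sup>2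
      = (u1\<^sup>2 + t1\<^sup>2) * (u2\<^sup>2 + t2\<^sup>2) - (u1 * u2 + t1 * t2)\<^sup>2"
    unfolding u1_def u2_def t1_def t2_def c1 c2 by (simp add: algebra_simps power2_eq_square)
  also have "\<dots> = (u1 * t2 - u2 * t1)\<^sup>2"
    by (simp add: algebra_simps power2_eq_square)
  finally have "(u1 * t2 - u2 * t1)\<^sup>2 \<le> 0"
    using P by linarith
  then have "u1 * t2 - u2 * t1 = 0"
    by simp
  then have "2 * y * (A2 * B1 - A1 * B2) = 0"
    unfolding u1_def u2_def t1_def t2_def by (simp add: algebra_simps)
  then have AB: "A2 * B1 = A1 * B2"
    using \<open>y > 0\<close> by simp
  obtain c where "A2 = c * A1" "B2 = c * B1"
  proof (cases "A1 = 0")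
    case True
    then have "B1 \<noteq> 0" using K1 by auto
    with True AB show ?thesis
      by (intro that[of "B2 / B1"]) auto
  next
    case False
    with AB show ?thesis
      by (intro that[of "A2 / A1"]) (auto simp: field_simps)
  qed
  moreover from calculation have "C2 = c * C1"
    unfolding c1 c2 by (simp add: algebra_simps)
  moreover from calculation have "c \<noteq> 0"
    using K2 by auto
  ultimately show ?thesis by blast
qed

lemma geod_eq_if_meet:
  assumes "det2 v w \<noteq> 0" "det2 v' w' \<noteq> 0"
    and "(det2 v w * det2 v' w')\<^sup>2 \<le> (det2 v v' * det2 w w' + det2 v w' * det2 w v')\<^sup>2"
    and "geod v w \<inter> geod v' w' \<noteq> {}"
  shows "geod v w = geod v' w'"
proof -
  let ?A1 = "circ_A v w" and ?B1 = "circ_B v w" and ?C1 = "circ_C v w"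
  let ?A2 = "circ_A v' w'" and ?B2 = "circ_B v' w'" and ?C2 = "circ_C v' w'"
  obtain z where "z \<in> geod v w" "z \<in> geod v' w'"
    using assms(4) by blast
  then have "Im z > 0"
    and e1: "of_int ?A1 * ((Re z)\<^sup>2 + (Im z)\<^sup>2) + of_int ?B1 * Re z + of_int ?C1 = 0"
    and e2: "of_int ?A2 * ((Re z)\<^sup>2 + (Im z)\<^sup>2) + of_int ?B2 * Re z + of_int ?C2 = 0"
    using mem_geod_iff_circ[OF assms(1)] mem_geod_iff_circ[OF assms(2)] by auto
  have K1: "0 < (real_of_int ?B1)\<^sup>2 - 4 * of_int ?A1 * of_int ?C1"
    and K2: "0 < (real_of_int ?B2)\<^sup>2 - 4 * of_int ?A2 * of_int ?C2"
    using assms(1,2) by (simp_all add: circ_discriminant)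
  have "real_of_int ((det2 v w * det2 v' w')\<^sup>2)
      \<le> of_int ((det2 v v' * det2 w w' + det2 v w' * det2 w v')\<^sup>2)"
    using assms(3) by (simp only: of_int_le_iff)
  then have P: "((real_of_int ?B1)\<^sup>2 - 4 * of_int ?A1 * of_int ?C1) * ((of_int ?B2)\<^sup>2 - 4 * of_int ?A2 * of_int ?C2)
      \<le> (of_int ?B1 * of_int ?B2 - 2 * of_int ?A1 * of_int ?C2 - 2 * of_int ?A2 * of_int ?C1)\<^sup>2"
    unfolding circ_discriminant circ_inversive_product power2_minus by (simp add: power_mult_distrib)
  obtain c :: real where "c \<noteq> 0" and c: "of_int ?A2 = c * of_int ?A1" "of_int ?B2 = c * of_int ?B1"
      "of_int ?C2 = c * of_int ?C1"
    using circles_proportional_if_common_upper_point[OF \<open>Im z > 0\<close> e1 e2 K1 K2 P] by blast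
  have "of_int ?A2 * ((Re t)\<^sup>2 + (Im t)\<^sup>2) + of_int ?B2 * Re t + of_int ?C2
      = c * (of_int ?A1 * ((Re t)\<^sup>2 + (Im t)\<^sup>2) + of_int ?B1 * Re t + of_int ?C1)" for t
    unfolding c by (simp add: algebra_simps)
  then show ?thesis
    using \<open>c \<noteq> 0\<close> mem_geod_iff_circ[OF assms(1)] mem_geod_iff_circ[OF assms(2)] by auto
qed

theorem proposition4p11:
  fixes k :: int and L :: "(int \<times> int) set" and v w v' w' :: "int \<times> int"
  assumes "k > 0" and "L \<in> Lk k"
    and "v \<in> Vert" "w \<in> Vert" "v' \<in> Vert" "w' \<in> Vert"
    and "phi k v = L" "phi k w = L" "phi k v' = L" "phi k w' = L"
    and "dist_F v w = k" "dist_F v' w' = k"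
    and "geod v w \<noteq> geod v' w'"
  shows "geod v w \<inter> geod v' w' = {}"
proof -
  have dets: "\<bar>det2 v w\<bar> = k" "\<bar>det2 v' w'\<bar> = k"
    using assms(11,12) by (simp_all add: dist_F_eq_abs_det2)
  have "k dvd det2 v v'" "k dvd det2 w w'" "k dvd det2 v w'" "k dvd det2 w v'"
    using phi_eq_imp_dvd_det2[OF assms(1)] assms(7-10) by simp_all
  with assms(1) dets have "k\<^sup>2 \<le> \<bar>det2 v v' * det2 w w' + det2 v w' * det2 w v'\<bar>"
    by (rule det2_cross_sum_lower_bound)
  then have "(k\<^sup>2)\<^sup>2 \<le> (det2 v v' * det2 w w' + det2 v w' * det2 w v')\<^sup>2"
    by (metis power2_abs power_mono zero_le_power2)
  moreover have "(det2 v w * det2 v' w')\<^sup>2 = (k\<^sup>2)\<^sup>2"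
    by (metis dets abs_mult power2_abs power2_eq_square)
  moreover have "det2 v w \<noteq> 0" "det2 v' w' \<noteq> 0"
    using assms(1) dets by auto
  ultimately show ?thesis
    using geod_eq_if_meet assms(13) by metis
qed

end
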